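(* Let $p$ be a prime with $p\equiv 1\pmod 8$ and $p \equiv 2 \pmod 3$, and let $n\ge 2$ be an integer. Let $(\alpha,\beta,\kappa)\in\mathbb{Z}^3$ be nonzero integers such that: (B1) $\alpha$ and $\beta$ are odd and $\gcd(\alpha,3)=\gcd(\alpha,p)=\gcd(\alpha,\beta)=\gcd(\beta,p)=1$; (B2) for every odd prime $l\ne 3$ dividing $\alpha\beta$, $p$ is a square in $\mathbb{Q}_l^\times$; (B3) $v_3(\kappa)$ is an odd positive integer and $v_3(\kappa)<2n-1$; (B4) $\kappa\not\equiv 0 \pmod p$; (B5) for every odd prime $l\ne 3$ dividing $\kappa$, $p$ is a square in $\mathbb{Q}_l^\times$. Define $A = \frac{p\alpha^2-9\beta^2}{2}$, $B = 9(p\alpha^2-9\beta^2)\kappa^2$, $C = 9(p\alpha^2+9\beta^2)\kappa^2$, $D=\frac{p\alpha^2+9\beta^2}{2}$, $E = 81\alpha\beta\kappa^3$, $F = 18\alpha\beta\kappa$, $G = 3\alpha\beta$. Then $(A,B,C,D,E,F,G)$ satisfies Hypothesis FM with respect to $(p,n)$.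
   Context: $v_l$ denotes the $l$-adic valuation. Hypothesis FM. Let $p$ be a prime with $p\equiv 1 \pmod 8$ and $n\ge 1$ an integer. A septuple $(A,B,C,D,E,F,G)\in\mathbb{Z}^7$, not all zero, satisfies Hypothesis FM with respect to $(p,n)$ if: (A1) $B^2 - C^2 + 2pEF = 0$, $2AB - 2CD + pF^2 = 0$, and $A^2 - D^2 + pG^2 = 0$; (A2) for every odd prime $l$ with $l\ne 3$, $l\ne p$ and $l\mid E$: $p$ is a square in $\mathbb{Q}_l^\times$ or $v_l(E)-v_l(G)<6n$; (A3) $\gcd(A,D,G)=1$, $E\not\equiv 0 \pmod p$ and $G\not\equiv 0\pmod p$; (A4) for every odd prime $l$ with $l\ne 3$, $l\ne p$ and $l \mid \gcd(AC-BD,\ DE-CF,\ AE-BF)$: $p$ is a square in $\mathbb{Q}_l^\times$; (A5) there is an integer $H$ with $G - EH^6\equiv 0 \pmod p$ such that $A+\zeta BH^4$ is a quadratic non-residue in $\mathbb{F}_p^\times$ for every cube root of unity $\zeta\in\mathbb{F}_p^\times$; and, if $3$ is a quadratic non-residue in $\mathbb{F}_p^\times$, additionally: (A6) $v_3(E)-v_3(G)<6n$; (A7) $A+B\not\equiv 0\pmod 3$ and $G\equiv 0 \pmod 3$. *)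

theory Defs
  imports "HOL-Number_Theory.Number_Theory"
begin

text \<open>A nonzero integer is a square in Q_l iff it is a square in Z_l, and by
  compactness of Z_l this holds iff x^2 = a is solvable modulo every power l^k.\<close>
definition padic_square :: "int \<Rightarrow> int \<Rightarrow> bool" where
  "padic_square l a \<longleftrightarrow> a \<noteq> 0 \<and> (\<forall>k::nat. \<exists>x::int. [x^2 = a] (mod l^k))"

definition qnr :: "int \<Rightarrow> int \<Rightarrow> bool" where
  "qnr p a \<longleftrightarrow> Legendre a p = -1"

definition vdiff :: "int \<Rightarrow> int \<Rightarrow> int \<Rightarrow> int" where
  "vdiff l x y = int (multiplicity l x) - int (multiplicity l y)"

definition hypFM :: "int \<Rightarrow> nat \<Rightarrow> int \<Rightarrow> int \<Rightarrow> int \<Rightarrow> int \<Rightarrow> int \<Rightarrow> int \<Rightarrow> int \<Rightarrow> bool" where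
  "hypFM p n A B C D E F G \<longleftrightarrow>
     \<not> (A = 0 \<and> B = 0 \<and> C = 0 \<and> D = 0 \<and> E = 0 \<and> F = 0 \<and> G = 0) \<and>
     \<comment> \<open>(A1)\<close>
     B^2 - C^2 + 2*p*E*F = 0 \<and> 2*A*B - 2*C*D + p*F^2 = 0 \<and> A^2 - D^2 + p*G^2 = 0 \<and>
     \<comment> \<open>(A2)\<close>
     (\<forall>l::int. prime l \<and> odd l \<and> l \<noteq> 3 \<and> l \<noteq> p \<and> l dvd E \<longrightarrow>
        padic_square l p \<or> vdiff l E G < 6 * int n) \<and>
     \<comment> \<open>(A3)\<close>
     gcd (gcd A D) G = 1 \<and> \<not> [E = 0] (mod p) \<and> \<not> [G = 0] (mod p) \<and>
     \<comment> \<open>(A4)\<close>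
     (\<forall>l::int. prime l \<and> odd l \<and> l \<noteq> 3 \<and> l \<noteq> p \<and>
        l dvd gcd (gcd (A*C - B*D) (D*E - C*F)) (A*E - B*F) \<longrightarrow> padic_square l p) \<and>
     \<comment> \<open>(A5)\<close>
     (\<exists>H::int. [G - E*H^6 = 0] (mod p) \<and>
        (\<forall>z::int. [z^3 = 1] (mod p) \<longrightarrow> qnr p (A + z*B*H^4))) \<and>
     \<comment> \<open>(A6),(A7), only when 3 is a non-residue mod p\<close>
     (qnr p 3 \<longrightarrow>
        vdiff 3 E G < 6 * int n \<and> \<not> [A + B = 0] (mod 3) \<and> [G = 0] (mod 3))"

end

theory Submission
  imports Defs
begin

(* Write a = A and d = D. Then d + a = p\<alpha>^2 and d - a = 9\<beta>^2, so the three quadrics of (A1)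
   all reduce to d^2 - a^2 = 9p\<alpha>^2\<beta>^2, and a, d are coprime because p\<alpha>^2 and 9\<beta>^2 are.
   Every prime l \<noteq> 3 dividing E, or dividing the minors of (A4) (AC = BD, and the other two are
   a resp. d times 243\<alpha>\<beta>\<kappa>^3), divides \<alpha>\<beta>\<kappa>; so (B2) and (B5) give (A2) and (A4).

   For (A5) work modulo p: p \<equiv> 1 (mod 8) makes -1, 2 and every prime l such that p is a square
   in Q_l quadratic residues, while 3 is a non-residue by reciprocity since p \<equiv> 2 (mod 3). As
   v_3(\<kappa>) is odd, 3\<kappa> is a nonzero square, so some H satisfies 3\<kappa>H^2 \<equiv> 1, and then G \<equiv> EH^6.
   Because 3 does not divide p - 1, the only cube root of unity is 1, and A + BH^4 \<equiv> 3a with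
   2 * 3a \<equiv> -27\<beta>^2, a non-residue. Finally v_3(E) - v_3(G) = 3 + 3 v_3(\<kappa>) < 6n, and 3 does not
   divide a. *)

lemma euler_criterion_int:
  fixes p a :: int
  assumes "prime p" "p > 2"
  shows "[Legendre a p = a ^ nat ((p - 1) div 2)] (mod p)"
proof -
  have "nat ((p - 1) div 2) = (nat p - 1) div 2"
    by (simp add: nat_div_distrib nat_diff_distrib')
  then show ?thesis
    using euler_criterion[of "nat p" a] assms by simp
qed

lemma Legendre_cases: "Legendre a p \<in> {-1, 0, 1}"
  unfolding Legendre_def by auto

lemma sign_cong_imp_eq:
  fixes x y m :: int
  assumes "x \<in> {-1, 0, 1}" "y \<in> {-1, 0, 1}" "[x = y] (mod m)" "m > 2"
  shows "x = y"
proof -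
  have "[x + 1 = y + 1] (mod m)" using assms(3) by (rule cong_add) simp
  then show ?thesis using assms(1,2,4) cong_less_imp_eq_int[of "x + 1" m "y + 1"] by auto
qed

lemma Legendre_cong:
  assumes "[a = b] (mod p)"
  shows "Legendre a p = Legendre b p"
proof -
  have "[a = c] (mod p) \<longleftrightarrow> [b = c] (mod p)" "[c = a] (mod p) \<longleftrightarrow> [c = b] (mod p)" for c
    using assms cong_sym cong_trans by blast+
  then show ?thesis unfolding Legendre_def QuadRes_def by simp
qed

lemma Legendre_mult:
  fixes p :: int
  assumes "prime p" "p > 2"
  shows "Legendre (a * b) p = Legendre a p * Legendre b p"
proof -
  let ?e = "nat ((p - 1) div 2)"
  have "[Legendre (a * b) p = Legendre a p * Legendre b p] (mod p)"
  proof -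
    have "[Legendre (a * b) p = a ^ ?e * b ^ ?e] (mod p)"
      using euler_criterion_int[OF assms, of "a * b"] by (simp add: power_mult_distrib)
    moreover have "[Legendre a p * Legendre b p = a ^ ?e * b ^ ?e] (mod p)"
      using euler_criterion_int[OF assms] by (intro cong_mult)
    ultimately show ?thesis by (metis cong_sym cong_trans)
  qed
  moreover have "Legendre a p * Legendre b p \<in> {-1, 0, 1}"
    using Legendre_cases[of a p] Legendre_cases[of b p] by auto
  ultimately show ?thesis using sign_cong_imp_eq Legendre_cases assms(2) by blast
qed

lemma Legendre_one:
  fixes p :: int
  assumes "prime p"
  shows "Legendre 1 p = 1"
proof -
  have "\<not> [1 = 0] (mod p)" using assms by (auto simp: cong_0_iff)
  moreover have "QuadRes p 1" unfolding QuadRes_def by (rule exI[of _ 1]) simp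
  ultimately show ?thesis by (simp add: Legendre_def)
qed

lemma Legendre_power:
  fixes p :: int
  assumes "prime p" "p > 2"
  shows "Legendre (a ^ k) p = Legendre a p ^ k"
  by (induction k) (simp_all add: Legendre_one[OF assms(1)] Legendre_mult[OF assms])

lemma Legendre_square:
  fixes p :: int
  assumes "prime p" "p > 2" "\<not> p dvd a"
  shows "Legendre (a ^ 2) p = 1"
proof -
  have "Legendre a p \<noteq> 0" using assms(3) by (simp add: Legendre_def cong_0_iff)
  then show ?thesis using Legendre_power[OF assms(1,2)] Legendre_cases[of a p] by auto
qed

lemma Legendre_minus_one:
  fixes p :: int
  assumes "prime p" "[p = 1] (mod 4)"
  shows "Legendre (-1) p = 1"
proof -
  have p4: "p mod 4 = 1" using assms(2) by (simp add: cong_def)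
  then have "p > 2" using prime_ge_2_int[OF assms(1)] by presburger
  moreover have "even (nat ((p - 1) div 2))" using p4 \<open>p > 2\<close> by (simp add: even_nat_iff) presburger
  ultimately have "[Legendre (-1) p = 1] (mod p)"
    using euler_criterion_int[OF assms(1), of "-1"] by simp
  then show ?thesis using sign_cong_imp_eq[OF Legendre_cases] \<open>p > 2\<close> by auto
qed

(* x = g^((p-1)/8) for a primitive root g: g^((p-1)/2) squares to 1 but is not 1. *)
lemma exists_fourth_root_of_minus_one:
  fixes p :: int
  assumes "prime p" "[p = 1] (mod 8)"
  shows "\<exists>x. [x ^ 4 = -1] (mod p)"
proof -
  define q where "q = nat p"
  have pq: "p = int q" using assms(1) q_def prime_ge_0_int by simp
  have q: "prime q" "q mod 8 = 1"
    using assms pq by (auto simp: cong_def) presburger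
  obtain g where g: "residue_primroot q g"
    using prime_primitive_root_exists[of q] q(1) prime_gt_1_nat by blast
  then have ord_g: "ord q g = q - 1" using q(1) by (simp add: residue_primroot_def totient_prime)
  define e where "e = (q - 1) div 2"
  define y where "y = int g ^ e"
  have "2 * e = q - 1" using q(2) e_def by presburger
  then have "[g ^ (2 * e) = 1] (mod q)" using ord_g ord_divides by simp
  then have "p dvd (y - 1) * (y + 1)"
    unfolding y_def pq using cong_int_iff[of "g ^ (2 * e)" 1 q]
    by (simp add: cong_iff_dvd_diff power_mult algebra_simps power2_eq_square)
  moreover have "q > 1" using q(1) prime_gt_1_nat by blast
  then have "0 < e" "e < q - 1" using q(2) e_def by presburger+
  then have "\<not> [g ^ e = 1] (mod q)" using ord_g ord_divides[of g e q] by (auto dest: dvd_imp_le)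
  then have "\<not> p dvd y - 1"
    unfolding y_def pq using cong_int_iff[of "g ^ e" 1 q] by (simp add: cong_iff_dvd_diff)
  ultimately have "[y = -1] (mod p)"
    using assms(1) by (simp add: prime_dvd_mult_iff cong_iff_dvd_diff)
  moreover have "y = (int g ^ ((q - 1) div 8)) ^ 4"
  proof -
    have "e = (q - 1) div 8 * 4" using q(2) e_def by presburger
    then show ?thesis unfolding y_def by (simp add: power_mult)
  qed
  ultimately show ?thesis by auto
qed

(* Modulo p, x^-1 = -x^3, so x - x^3 = x + x^-1, and (x + x^-1)^2 = 2 + x^-2 (x^4 + 1). *)
lemma Legendre_two:
  fixes p :: int
  assumes "prime p" "[p = 1] (mod 8)"
  shows "Legendre 2 p = 1"
proof -
  obtain x where "[x ^ 4 = -1] (mod p)"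
    using exists_fourth_root_of_minus_one[OF assms] by blast
  moreover have "(x - x ^ 3) ^ 2 - 2 = (x ^ 4 + 1) * (x ^ 2 - 2)"
    by (simp add: algebra_simps power2_eq_square power3_eq_cube power4_eq_xxxx)
  ultimately have "QuadRes p 2"
    unfolding QuadRes_def by (metis cong_iff_dvd_diff diff_minus_eq_add dvd_mult2)
  moreover have "p > 2" using assms prime_ge_2_int[of p] by (simp add: cong_def) presburger
  then have "\<not> [2 = 0] (mod p)" by (auto simp: cong_0_iff dest: zdvd_imp_le)
  ultimately show ?thesis unfolding Legendre_def by simp
qed

lemma Legendre_three:
  fixes p :: int
  assumes "prime p" "[p = 1] (mod 4)" "[p = 2] (mod 3)"
  shows "Legendre 3 p = -1"
proof -
  have p: "p mod 4 = 1" "p mod 3 = 2" using assms(2,3) by (simp_all add: cong_def)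
  then have "p > 3" using prime_ge_2_int[OF assms(1)] by presburger
  moreover have "even (nat ((p - 1) div 2 * ((3 - 1) div 2)))"
    using p \<open>p > 3\<close> by (simp add: even_nat_iff) presburger
  ultimately have "Legendre p 3 * Legendre 3 p = 1"
    using Quadratic_Reciprocity_int[of p 3] assms(1) by simp
  moreover have "Legendre p 3 = Legendre 2 3" using Legendre_cong[OF assms(3)] .
  moreover have "\<not> QuadRes 3 (2::int)"
  proof
    assume "QuadRes 3 (2::int)"
    then obtain y :: int where "(y mod 3) ^ 2 mod 3 = 2"
      unfolding QuadRes_def by (auto simp: cong_def power_mod)
    moreover have "y mod 3 \<in> {0, 1, 2}" by auto
    ultimately show False by auto
  qed
  then have "Legendre 2 (3::int) = -1" by (simp add: Legendre_def cong_def)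
  ultimately show ?thesis by simp
qed

lemma Legendre_eq_one_if_padic_square:
  fixes p l :: int
  assumes "prime p" "[p = 1] (mod 4)" "prime l" "odd l" "l \<noteq> p" "padic_square l p"
  shows "Legendre l p = 1"
proof -
  have "p mod 4 = 1" using assms(2) by (simp add: cong_def)
  then have "p > 2" using prime_ge_2_int[OF assms(1)] by presburger
  have "l > 2" using prime_ge_2_int[OF assms(3)] assms(4) by presburger
  have "\<not> [p = 0] (mod l)"
    using primes_dvd_imp_eq[OF assms(3,1)] assms(5) by (auto simp: cong_0_iff)
  moreover have "QuadRes l p"
    using assms(6) unfolding padic_square_def QuadRes_def by (metis power_one_right)
  ultimately have "Legendre p l = 1" unfolding Legendre_def by simp
  moreover have "even (nat ((p - 1) div 2 * ((l - 1) div 2)))"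
    using \<open>p mod 4 = 1\<close> \<open>p > 2\<close> \<open>l > 2\<close> by (simp add: even_nat_iff) presburger
  ultimately show ?thesis
    using Quadratic_Reciprocity_int[of p l] assms \<open>p > 2\<close> \<open>l > 2\<close> by simp
qed

lemma Legendre_eq_one_if_prime_divisors:
  fixes p m :: int
  assumes "prime p" "[p = 1] (mod 4)" "m \<noteq> 0" "\<forall>l. prime l \<and> l dvd m \<longrightarrow> Legendre l p = 1"
  shows "Legendre m p = 1"
  using assms(3,4)
proof (induction "nat \<bar>m\<bar>" arbitrary: m rule: less_induct)
  case less
  have "p > 2" using assms(1,2) prime_ge_2_int[of p] by (simp add: cong_def) presburger
  show ?case
  proof (cases "is_unit m")
    case True
    then have "m = 1 \<or> m = -1" by auto
    then show ?thesis using Legendre_one[OF assms(1)] Legendre_minus_one[OF assms(1,2)] by auto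
  next
    case False
    then obtain l where l: "prime l" "l dvd m" using prime_divisor_exists less.prems(1) by blast
    then obtain m' where m': "m = l * m'" by blast
    have "\<bar>m'\<bar> < \<bar>m\<bar>" "m' \<noteq> 0"
      using m' less.prems(1) prime_ge_2_int[OF l(1)] by (auto simp: abs_mult)
    then have "Legendre m' p = 1" using less m' by auto
    then show ?thesis using Legendre_mult[OF assms(1) \<open>p > 2\<close>] m' l less.prems(2) by simp
  qed
qed

lemma Legendre_eq_Legendre_three_power:
  fixes p m :: int
  assumes "prime p" "[p = 1] (mod 8)" "m \<noteq> 0" "\<not> p dvd m"
    and "\<forall>l. prime l \<and> odd l \<and> l \<noteq> 3 \<and> l dvd m \<longrightarrow> padic_square l p"
  shows "Legendre m p = Legendre 3 p ^ multiplicity 3 m"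
proof -
  have p4: "[p = 1] (mod 4)" and "p > 2"
    using assms(1,2) prime_ge_2_int[of p] by (simp_all add: cong_def) presburger+
  obtain c where m: "m = 3 ^ multiplicity 3 m * c" and "\<not> 3 dvd c"
    using multiplicity_decompose'[of m 3] assms(3) by auto
  have "Legendre c p = 1"
  proof (rule Legendre_eq_one_if_prime_divisors[OF assms(1) p4])
    show "c \<noteq> 0" using m assms(3) by auto
    show "\<forall>l. prime l \<and> l dvd c \<longrightarrow> Legendre l p = 1"
    proof (intro allI impI)
      fix l assume l: "prime l \<and> l dvd c"
      then have "l dvd m" by (subst m) (simp add: l)
      have "l \<noteq> 3" using l \<open>\<not> 3 dvd c\<close> by auto
      have "l \<noteq> p" using \<open>l dvd m\<close> assms(4) by auto
      show "Legendre l p = 1"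
      proof (cases "l = 2")
        case True
        then show ?thesis using Legendre_two[OF assms(1,2)] by simp
      next
        case False
        then have "odd l" using l primes_dvd_imp_eq[of 2 l] by auto
        then show ?thesis
          using Legendre_eq_one_if_padic_square[OF assms(1) p4] assms(5) l \<open>l dvd m\<close> \<open>l \<noteq> 3\<close> \<open>l \<noteq> p\<close>
          by blast
      qed
    qed
  qed
  then show ?thesis
    by (subst m) (simp add: Legendre_mult[OF assms(1) \<open>p > 2\<close>] Legendre_power[OF assms(1) \<open>p > 2\<close>])
qed

lemma Legendre_three_mult_eq_one:
  fixes p \<kappa> :: int
  assumes "prime p" "[p = 1] (mod 8)" "[p = 2] (mod 3)" "\<kappa> \<noteq> 0" "\<not> p dvd \<kappa>"
    and "odd (multiplicity 3 \<kappa>)"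
    and "\<forall>l. prime l \<and> odd l \<and> l \<noteq> 3 \<and> l dvd \<kappa> \<longrightarrow> padic_square l p"
  shows "Legendre (3 * \<kappa>) p = 1"
proof -
  have "p > 2" and p4: "[p = 1] (mod 4)"
    using assms(1,2) prime_ge_2_int[of p] by (simp_all add: cong_def) presburger+
  have "Legendre (3 * \<kappa>) p = Legendre 3 p * Legendre 3 p ^ multiplicity 3 \<kappa>"
    using Legendre_mult[OF assms(1) \<open>p > 2\<close>] Legendre_eq_Legendre_three_power[OF assms(1,2,4,5,7)]
    by simp
  then show ?thesis using Legendre_three[OF assms(1) p4 assms(3)] assms(6) by simp
qed

lemma fermat_theorem_int:
  fixes p a :: int
  assumes "prime p" "\<not> p dvd a"
  shows "[a ^ nat (p - 1) = 1] (mod p)"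
proof -
  interpret residues p "residue_ring p"
    using prime_gt_1_int[OF assms(1)] by unfold_locales simp_all
  have "coprime a p" using assms prime_imp_coprime coprime_commute by blast
  moreover have "totient (nat p) = nat (p - 1)" using assms(1) by (simp add: totient_prime nat_diff_distrib')
  ultimately show ?thesis using euler_theorem by simp
qed

lemma cube_root_of_unity_cong_one:
  fixes p z :: int
  assumes "prime p" "[p = 2] (mod 3)" "[z ^ 3 = 1] (mod p)"
  shows "[z = 1] (mod p)"
proof -
  have "\<not> p dvd z"
  proof
    assume "p dvd z"
    then have "[z ^ 3 = 0] (mod p)" by (simp add: cong_0_iff power3_eq_cube)
    then have "[1 = 0] (mod p)" using assms(3) cong_sym cong_trans by blast
    then show False using assms(1) by (simp add: cong_0_iff not_prime_unit)
  qed
  then have "[z ^ nat (p - 1) = 1] (mod p)" using fermat_theorem_int[OF assms(1)] by blast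
  moreover have "p - 1 = 3 * ((p - 2) div 3) + 1" "(p - 2) div 3 \<ge> 0"
    using assms(2) prime_ge_2_int[OF assms(1)] by (simp_all add: cong_def) presburger+
  then have "nat (p - 1) = 3 * nat ((p - 2) div 3) + 1" by (simp add: nat_add_distrib nat_mult_distrib)
  then have "z ^ nat (p - 1) = (z ^ 3) ^ nat ((p - 2) div 3) * z" by (simp add: power_add power_mult)
  moreover have "[(z ^ 3) ^ nat ((p - 2) div 3) * z = z] (mod p)"
    using cong_mult[OF cong_pow[OF assms(3)] cong_refl, of _ z] by simp
  ultimately show ?thesis by (metis cong_sym cong_trans)
qed

lemma exists_inverse_square:
  fixes p c :: int
  assumes "prime p" "Legendre c p = 1"
  shows "\<exists>h. [c * h ^ 2 = 1] (mod p)"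
proof -
  obtain y where y: "[y ^ 2 = c] (mod p)" and "\<not> [c = 0] (mod p)"
    using assms(2) unfolding Legendre_def QuadRes_def by (auto split: if_splits)
  then have "coprime c p"
    using assms(1) prime_imp_coprime coprime_commute by (metis cong_0_iff)
  then obtain w where w: "[c * w = 1] (mod p)" using cong_solve_coprime_int by blast
  have "c * (y * w) ^ 2 = (c * w) * (w * y ^ 2)" by (simp add: algebra_simps power2_eq_square)
  moreover have "[(c * w) * (w * y ^ 2) = 1 * (w * c)] (mod p)"
    using w y by (intro cong_mult cong_refl)
  moreover have "[1 * (w * c) = 1] (mod p)" using w by (simp add: mult.commute)
  ultimately have "[c * (y * w) ^ 2 = 1] (mod p)" using cong_trans by metis
  then show ?thesis by blast
qed

lemma multiplicity_prime_power_mult: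
  fixes q x y :: "'a :: factorial_semiring"
  assumes "prime q" "x \<noteq> 0" "y \<noteq> 0"
  shows "multiplicity q (q ^ k * x * y ^ j) = k + multiplicity q x + j * multiplicity q y"
  using assms by (simp add: prime_elem_multiplicity_mult_distrib prime_elem_multiplicity_power_distrib)

lemma prime_dvd_prime_power_mult:
  fixes l q x y :: "'a :: factorial_semiring"
  assumes "prime l" "prime q" "l \<noteq> q" "l dvd q ^ k * x * y ^ j"
  shows "l dvd x \<or> l dvd y"
proof -
  have "\<not> l dvd q ^ k"
    using assms(1-3) primes_dvd_imp_eq prime_dvd_power by blast
  then show ?thesis using assms(1,4) by (auto simp: prime_dvd_mult_iff dest: prime_dvd_power)
qed

lemma coprime_if_sum_diff_coprime:
  fixes a d :: "'a :: {algebraic_semidom, comm_ring_1}"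
  assumes "coprime (d + a) (d - a)"
  shows "coprime a d"
  using assms by (auto intro!: coprimeI elim: coprime_common_divisor)

lemma coprime_FM_A_D:
  fixes a d p \<alpha> \<beta> :: int
  assumes "d + a = p * \<alpha>^2" "d - a = 9 * \<beta>^2"
    and "coprime p 3" "coprime p \<beta>" "coprime \<alpha> 3" "coprime \<alpha> \<beta>"
  shows "coprime a d"
proof (rule coprime_if_sum_diff_coprime)
  have "coprime p 9" "coprime \<alpha> 9" using assms(3,5) coprime_mult_right_iff[of _ 3 3] by auto
  then show "coprime (d + a) (d - a)"
    unfolding assms(1,2) using assms(4,6) by simp
qed

lemma FM_quadrics:
  fixes a d p \<alpha> \<beta> \<kappa> :: int
  assumes "d + a = p * \<alpha>^2" "d - a = 9 * \<beta>^2"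
  shows "(18*a*\<kappa>^2)^2 - (18*d*\<kappa>^2)^2 + 2*p*(81*\<alpha>*\<beta>*\<kappa>^3)*(18*\<alpha>*\<beta>*\<kappa>) = 0"
    and "2*a*(18*a*\<kappa>^2) - 2*(18*d*\<kappa>^2)*d + p*(18*\<alpha>*\<beta>*\<kappa>)^2 = 0"
    and "a^2 - d^2 + p*(3*\<alpha>*\<beta>)^2 = 0"
proof -
  have "d^2 - a^2 = (d + a) * (d - a)" by (simp add: algebra_simps power2_eq_square)
  then have key: "a^2 - d^2 + 9 * p * \<alpha>^2 * \<beta>^2 = 0" using assms by simp
  have "(18*a*\<kappa>^2)^2 - (18*d*\<kappa>^2)^2 + 2*p*(81*\<alpha>*\<beta>*\<kappa>^3)*(18*\<alpha>*\<beta>*\<kappa>)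
      = 324 * \<kappa>^4 * (a^2 - d^2 + 9 * p * \<alpha>^2 * \<beta>^2)"
    by (simp add: algebra_simps power2_eq_square power4_eq_xxxx power3_eq_cube)
  moreover have "2*a*(18*a*\<kappa>^2) - 2*(18*d*\<kappa>^2)*d + p*(18*\<alpha>*\<beta>*\<kappa>)^2
      = 36 * \<kappa>^2 * (a^2 - d^2 + 9 * p * \<alpha>^2 * \<beta>^2)"
    by (simp add: algebra_simps power2_eq_square)
  moreover have "a^2 - d^2 + p*(3*\<alpha>*\<beta>)^2 = a^2 - d^2 + 9 * p * \<alpha>^2 * \<beta>^2"
    by (simp add: algebra_simps power2_eq_square)
  ultimately show "(18*a*\<kappa>^2)^2 - (18*d*\<kappa>^2)^2 + 2*p*(81*\<alpha>*\<beta>*\<kappa>^3)*(18*\<alpha>*\<beta>*\<kappa>) = 0"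
    and "2*a*(18*a*\<kappa>^2) - 2*(18*d*\<kappa>^2)*d + p*(18*\<alpha>*\<beta>*\<kappa>)^2 = 0"
    and "a^2 - d^2 + p*(3*\<alpha>*\<beta>)^2 = 0"
    using key by simp_all
qed

lemma prime_dvd_FM_minors:
  fixes a d l \<alpha> \<beta> \<kappa> :: int
  assumes "coprime a d" "prime l" "l \<noteq> 3"
    and "l dvd gcd (gcd (a*(18*d*\<kappa>^2) - (18*a*\<kappa>^2)*d)
                       (d*(81*\<alpha>*\<beta>*\<kappa>^3) - (18*d*\<kappa>^2)*(18*\<alpha>*\<beta>*\<kappa>)))
                  (a*(81*\<alpha>*\<beta>*\<kappa>^3) - (18*a*\<kappa>^2)*(18*\<alpha>*\<beta>*\<kappa>))"
  shows "l dvd \<alpha> * \<beta> \<or> l dvd \<kappa>"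
proof -
  have "l dvd d*(81*\<alpha>*\<beta>*\<kappa>^3) - (18*d*\<kappa>^2)*(18*\<alpha>*\<beta>*\<kappa>)"
    and "l dvd a*(81*\<alpha>*\<beta>*\<kappa>^3) - (18*a*\<kappa>^2)*(18*\<alpha>*\<beta>*\<kappa>)"
    using assms(4) by (meson dvd_trans gcd_dvd1 gcd_dvd2)+
  moreover have "x*(81*\<alpha>*\<beta>*\<kappa>^3) - (18*x*\<kappa>^2)*(18*\<alpha>*\<beta>*\<kappa>) = - (3^5 * (x * (\<alpha>*\<beta>)) * \<kappa>^3)"
    for x by (simp add: algebra_simps power2_eq_square power3_eq_cube)
  ultimately have "l dvd 3^5 * (d * (\<alpha>*\<beta>)) * \<kappa>^3" "l dvd 3^5 * (a * (\<alpha>*\<beta>)) * \<kappa>^3"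
    by (metis dvd_minus_iff)+
  then have "l dvd d * (\<alpha> * \<beta>) \<or> l dvd \<kappa>" "l dvd a * (\<alpha> * \<beta>) \<or> l dvd \<kappa>"
    using prime_dvd_prime_power_mult[OF assms(2) _ assms(3)] by (simp_all del: power_numeral)
  then have "(l dvd d \<or> l dvd \<alpha> * \<beta>) \<or> l dvd \<kappa>" "(l dvd a \<or> l dvd \<alpha> * \<beta>) \<or> l dvd \<kappa>"
    using prime_dvd_mult_iff[OF assms(2)] by blast+
  moreover have "\<not> (l dvd a \<and> l dvd d)"
    using assms(1,2) coprime_common_divisor not_prime_unit by blast
  ultimately show ?thesis by blast
qed

lemma FM_residue_condition:
  fixes p a \<alpha> \<beta> \<kappa> :: int
  assumes p: "prime p" "[p = 1] (mod 8)" "[p = 2] (mod 3)"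
    and a: "2 * a = p * \<alpha>^2 - 9 * \<beta>^2" and "\<not> p dvd \<beta>" and "Legendre (3 * \<kappa>) p = 1"
  shows "\<exists>H. [3*\<alpha>*\<beta> - 81*\<alpha>*\<beta>*\<kappa>^3 * H^6 = 0] (mod p) \<and>
             (\<forall>z. [z^3 = 1] (mod p) \<longrightarrow> qnr p (a + z * (18*a*\<kappa>^2) * H^4))"
proof -
  have "p > 2" and p4: "[p = 1] (mod 4)"
    using p(1,2) prime_ge_2_int[of p] by (simp_all add: cong_def) presburger+
  obtain H where H: "[3 * \<kappa> * H^2 = 1] (mod p)" using exists_inverse_square[OF p(1) assms(6)] by blast
  define t where "t = 3 * \<kappa> * H^2"
  have t: "[t = 1] (mod p)" using H t_def by simp
  have "3*\<alpha>*\<beta> - 81*\<alpha>*\<beta>*\<kappa>^3 * H^6 = 3*\<alpha>*\<beta>*(1 - t^3)"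
    unfolding t_def by (simp add: algebra_simps power_mult_distrib flip: power_mult)
  also have "[\<dots> = 3*\<alpha>*\<beta>*(1 - 1^3)] (mod p)"
    using t by (intro cong_mult cong_diff cong_pow cong_refl)
  finally have sixth_power: "[3*\<alpha>*\<beta> - 81*\<alpha>*\<beta>*\<kappa>^3 * H^6 = 0] (mod p)" by simp
  have "qnr p (a + z * (18*a*\<kappa>^2) * H^4)" if "[z^3 = 1] (mod p)" for z
  proof -
    have z: "[z = 1] (mod p)" using cube_root_of_unity_cong_one[OF p(1,3) that] .
    have "2 * (a + z * (18*a*\<kappa>^2) * H^4) = 2*a*(1 + 2*z*t^2)"
      unfolding t_def by (simp add: algebra_simps power_mult_distrib flip: power_mult)
    also have "[\<dots> = 2*a*(1 + 2*1*1^2)] (mod p)"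
      using z t by (intro cong_mult cong_add cong_pow cong_refl)
    also have "2*a*(1 + 2*1*1^2) = p*(3*\<alpha>^2) + (-1) * 3^3 * \<beta>^2"
      using a by simp
    also have "[\<dots> = 0 + (-1) * 3^3 * \<beta>^2] (mod p)"
      by (intro cong_add cong_refl) (simp add: cong_0_iff)
    finally have "Legendre (2 * (a + z * (18*a*\<kappa>^2) * H^4)) p = Legendre ((-1) * 3^3 * \<beta>^2) p"
      by (simp add: Legendre_cong)
    then have "Legendre 2 p * Legendre (a + z * (18*a*\<kappa>^2) * H^4) p
        = Legendre (-1) p * Legendre 3 p ^ 3 * Legendre (\<beta>^2) p"
      by (simp only: Legendre_mult[OF p(1) \<open>p > 2\<close>] Legendre_power[OF p(1) \<open>p > 2\<close>])
    then show ?thesis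
      using Legendre_two[OF p(1,2)] Legendre_minus_one[OF p(1) p4] Legendre_three[OF p(1) p4 p(3)]
        Legendre_square[OF p(1) \<open>p > 2\<close> assms(5)]
      by (simp add: qnr_def)
  qed
  then show ?thesis using sixth_power by blast
qed

lemma FM_three_adic_conditions:
  fixes p a \<alpha> \<beta> \<kappa> :: int and n :: nat
  assumes "[p = 2] (mod 3)" "2 * a = p * \<alpha>^2 - 9 * \<beta>^2" "coprime \<alpha> 3"
    and "\<alpha> \<noteq> 0" "\<beta> \<noteq> 0" "\<kappa> \<noteq> 0" "int (multiplicity 3 \<kappa>) < 2 * int n - 1"
  shows "vdiff 3 (81*\<alpha>*\<beta>*\<kappa>^3) (3*\<alpha>*\<beta>) < 6 * int n"
    and "\<not> [a + 18*a*\<kappa>^2 = 0] (mod 3)"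
proof -
  have "multiplicity 3 (3^4 * (\<alpha>*\<beta>) * \<kappa>^3) = 4 + multiplicity 3 (\<alpha>*\<beta>) + 3 * multiplicity 3 \<kappa>"
    and "multiplicity 3 (3^1 * (\<alpha>*\<beta>) * \<kappa>^0) = 1 + multiplicity 3 (\<alpha>*\<beta>) + 0 * multiplicity 3 \<kappa>"
    using assms(4-6) by (intro multiplicity_prime_power_mult; simp)+
  then have "vdiff 3 (81*\<alpha>*\<beta>*\<kappa>^3) (3*\<alpha>*\<beta>) = 3 + 3 * int (multiplicity 3 \<kappa>)"
    unfolding vdiff_def by (simp add: mult.assoc)
  then show "vdiff 3 (81*\<alpha>*\<beta>*\<kappa>^3) (3*\<alpha>*\<beta>) < 6 * int n" using assms(7) by simp
  show "\<not> [a + 18*a*\<kappa>^2 = 0] (mod 3)"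
  proof
    assume "[a + 18*a*\<kappa>^2 = 0] (mod 3)"
    then have "3 dvd a" by (simp add: cong_0_iff dvd_add_left_iff)
    moreover have "p * \<alpha>^2 = 2 * a + 3 * (3 * \<beta>^2)" using assms(2) by simp
    ultimately have "3 dvd p * \<alpha>^2" by simp
    moreover have "\<not> 3 dvd p" using assms(1) by (auto simp: cong_def)
    moreover have "\<not> 3 dvd \<alpha>" using coprime_common_divisor[OF assms(3), of 3] by auto
    ultimately show False by (simp add: prime_dvd_mult_iff prime_dvd_power_iff)
  qed
qed

theorem lemma3p1:
  fixes p :: int and n :: nat and \<alpha> \<beta> \<kappa> :: int
  assumes "prime p" and "[p = 1] (mod 8)" and "[p = 2] (mod 3)" and "n \<ge> 2"
    and "\<alpha> \<noteq> 0" and "\<beta> \<noteq> 0" and "\<kappa> \<noteq> 0"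
    and B1: "odd \<alpha>" "odd \<beta>" "gcd \<alpha> 3 = 1" "gcd \<alpha> p = 1" "gcd \<alpha> \<beta> = 1" "gcd \<beta> p = 1"
    and B2: "\<forall>l::int. prime l \<and> odd l \<and> l \<noteq> 3 \<and> l dvd \<alpha> * \<beta> \<longrightarrow> padic_square l p"
    and B3: "odd (multiplicity 3 \<kappa>)" "multiplicity 3 \<kappa> > 0"
            "int (multiplicity 3 \<kappa>) < 2 * int n - 1"
    and B4: "\<not> [\<kappa> = 0] (mod p)"
    and B5: "\<forall>l::int. prime l \<and> odd l \<and> l \<noteq> 3 \<and> l dvd \<kappa> \<longrightarrow> padic_square l p"
  shows "hypFM p n
           ((p * \<alpha>^2 - 9 * \<beta>^2) div 2)
           (9 * (p * \<alpha>^2 - 9 * \<beta>^2) * \<kappa>^2)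
           (9 * (p * \<alpha>^2 + 9 * \<beta>^2) * \<kappa>^2)
           ((p * \<alpha>^2 + 9 * \<beta>^2) div 2)
           (81 * \<alpha> * \<beta> * \<kappa>^3)
           (18 * \<alpha> * \<beta> * \<kappa>)
           (3 * \<alpha> * \<beta>)"
proof -
  have p: "odd p" "p \<noteq> 3" using assms(2,3) by (auto simp: cong_def) presburger
  have cop: "coprime \<alpha> 3" "coprime \<alpha> \<beta>" "coprime p \<alpha>" "coprime p \<beta>" "coprime p 3"
    using B1(3-6) p(2) assms(1) primes_coprime[of p 3]
    by (simp_all add: coprime_iff_gcd_eq_1 gcd.commute)
  have "\<not> p dvd x" if "coprime p x" for x
    using that assms(1) coprime_common_divisor[of p x p] not_prime_unit by auto
  then have p_ndvd: "\<not> p dvd \<alpha>" "\<not> p dvd \<beta>" "\<not> p dvd 3" "\<not> p dvd \<alpha> * \<beta>" "\<not> p dvd \<kappa>"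
    using cop(3-5) B4 by (simp_all add: cong_0_iff)
  have "even (p * \<alpha>^2 - 9 * \<beta>^2)" "even (p * \<alpha>^2 + 9 * \<beta>^2)"
    using p(1) B1(1,2) by simp_all
  then obtain a d where a: "2 * a = p * \<alpha>^2 - 9 * \<beta>^2" and d: "2 * d = p * \<alpha>^2 + 9 * \<beta>^2"
    by (metis dvd_def)
  have sum: "d + a = p * \<alpha>^2" and diff: "d - a = 9 * \<beta>^2" using a d by linarith+
  have "coprime a d" using coprime_FM_A_D[OF sum diff cop(5,4,1,2)] .
  then have gcd_ad: "gcd (gcd a d) (3 * \<alpha> * \<beta>) = 1" by (simp add: coprime_iff_gcd_eq_1)
  have E_divisor: "l dvd \<alpha> * \<beta> \<or> l dvd \<kappa>" if "prime l" "l \<noteq> 3" "l dvd 81 * \<alpha> * \<beta> * \<kappa>^3" for l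
    using prime_dvd_prime_power_mult[OF that(1) _ that(2), of 4 "\<alpha> * \<beta>" \<kappa> 3] that(3)
    by (simp add: mult.assoc)
  have local_square: "padic_square l p" if "prime l" "odd l" "l \<noteq> 3" "l dvd \<alpha> * \<beta> \<or> l dvd \<kappa>" for l
    using B2 B5 that by blast
  have "(p * \<alpha>^2 - 9 * \<beta>^2) div 2 = a" "(p * \<alpha>^2 + 9 * \<beta>^2) div 2 = d"
    and "9 * (p * \<alpha>^2 - 9 * \<beta>^2) * \<kappa>^2 = 18 * a * \<kappa>^2" "9 * (p * \<alpha>^2 + 9 * \<beta>^2) * \<kappa>^2 = 18 * d * \<kappa>^2"
    using a[symmetric] d[symmetric] by simp_all
  note abcd = this
  have "\<not> [81 * \<alpha> * \<beta> * \<kappa>^3 = 0] (mod p)" "\<not> [3 * \<alpha> * \<beta> = 0] (mod p)"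
    using E_divisor[OF assms(1) p(2)] p_ndvd by (auto simp: cong_0_iff prime_dvd_mult_iff[OF assms(1)])
  moreover have "3 * \<alpha> * \<beta> \<noteq> 0" "[3 * \<alpha> * \<beta> = 0] (mod 3)"
    using assms(5,6) by (simp_all add: cong_0_iff)
  ultimately show ?thesis
    unfolding hypFM_def abcd
    using FM_quadrics[OF sum diff] E_divisor local_square gcd_ad prime_dvd_FM_minors[OF \<open>coprime a d\<close>]
      FM_residue_condition[OF assms(1-3) a p_ndvd(2) Legendre_three_mult_eq_one[OF assms(1-3,7) p_ndvd(5) B3(1) B5]]
      FM_three_adic_conditions[OF assms(3) a cop(1) assms(5-7) B3(3)]
    by (intro conjI) blast+
qed

end
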